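(* For every integer $m\ge0$, $$A_{2m+1}(0,-1)=(-1)^m\frac{E_{2m+1}}{2^m},\qquad A_{2m+2}(0,-1)=(-1)^m\frac{E_{2m+3}}{2^{m+1}}.$$
   Context: For a permutation $\pi=a_1\cdots a_n$ of $[n]$, an index $i\in[n-1]$ is a descent if $a_i>a_{i+1}$; $\mathrm{odes}(\pi)$ and $\mathrm{edes}(\pi)$ count descents at odd and even positions. $A_n(p,q)=\sum_{\pi\in\mathfrak S_n}p^{\mathrm{odes}(\pi)}q^{\mathrm{edes}(\pi)}$. $E_n$ is the Euler number, the number of alternating permutations $a_1>a_2<a_3>\cdots$ in $\mathfrak S_n$; $\sum_{n\ge0}E_nt^n/n!=\tan t+\sec t$. *)

theory Defs
  imports Complex_Main "HOL-Combinatorics.Multiset_Permutations"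
begin

text \<open>Permutations of [n] = {1..n} are lists a_1 ... a_n (a_i = xs ! (i-1)).\<close>

definition perms :: "nat \<Rightarrow> nat list set" where
  "perms n = permutations_of_set {1..n}"

definition is_descent :: "nat list \<Rightarrow> nat \<Rightarrow> bool" where
  "is_descent xs i \<longleftrightarrow> 1 \<le> i \<and> i < length xs \<and> xs ! (i - 1) > xs ! i"

definition odes :: "nat list \<Rightarrow> nat" where
  "odes xs = card {i \<in> {1..<length xs}. odd i \<and> is_descent xs i}"

definition edes :: "nat list \<Rightarrow> nat" where
  "edes xs = card {i \<in> {1..<length xs}. even i \<and> is_descent xs i}"

definition A :: "nat \<Rightarrow> real \<Rightarrow> real \<Rightarrow> real" where
  "A n p q = (\<Sum>xs\<in>perms n. p ^ odes xs * q ^ edes xs)"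

definition alternating :: "nat list \<Rightarrow> bool" where
  "alternating xs \<longleftrightarrow> (\<forall>i \<in> {1..<length xs}.
      (odd i \<longrightarrow> xs ! (i - 1) > xs ! i) \<and> (even i \<longrightarrow> xs ! (i - 1) < xs ! i))"

definition euler_num :: "nat \<Rightarrow> nat" where
  "euler_num n = card {xs \<in> perms n. alternating xs}"

end

theory Submission
  imports Defs
begin

text \<open>
  Give each adjacent pair of a permutation a weight depending on its position and on whether it
  is a descent. Then A_n(0,q) and E_n are the total weights of the permutations of [n] for two
  such weightings. Splitting a permutation at its largest entry (for A) or its smallest entry
  (for E) factors the weight: unless the extremum sits at an even position the weight vanishes
  (for A a descent at an odd position picks up p = 0, for E the alternation fails), so the part
  to its right keeps the parities of its positions.
  Hence a(n) = A_n(0,q) and E(n) satisfy the binomial convolutions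
  a(n+1) = a(n) + q * sum_{odd k < n} C(n,k) a(k) a(n-k) and, for n >= 1,
  E(n+1) = sum_{odd k <= n} C(n,k) E(k) E(n-k).
  For q = -1 the two formulas then follow together by strong induction on m; at the even index
  the Euler convolution for 2m+2 is twice the one for 2m+1, by Pascal's rule and the symmetry
  k <-> 2m+2-k of its summands.
\<close>

section \<open>Position-dependent descent weights\<close>

text \<open>\<open>chain_weight w k xs\<close> treats \<open>xs\<close> as preceded by \<open>k\<close> entries: the pair of entries at
  (1-based) positions \<open>i\<close>, \<open>i+1\<close> of the whole word contributes \<open>w i (is it a descent)\<close>.\<close>

fun chain_weight :: "(nat \<Rightarrow> bool \<Rightarrow> real) \<Rightarrow> nat \<Rightarrow> nat list \<Rightarrow> real" where
  "chain_weight w k [] = 1"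
| "chain_weight w k [x] = 1"
| "chain_weight w k (x # y # zs) = w (Suc k) (y < x) * chain_weight w (Suc k) (y # zs)"

lemma chain_weight_Cons:
  "chain_weight w k (x # xs) = (if xs = [] then 1 else w (Suc k) (hd xs < x)) * chain_weight w (Suc k) xs"
  by (cases xs) auto

lemma chain_weight_append_Cons:
  "chain_weight w k (l @ x # r) =
     chain_weight w k l * (if l = [] then 1 else w (length l + k) (x < last l))
     * (if r = [] then 1 else w (Suc (length l + k)) (hd r < x)) * chain_weight w (Suc (length l + k)) r"
proof (induction l arbitrary: k)
  case Nil
  then show ?case by (simp add: chain_weight_Cons)
next
  case (Cons a l)
  show ?case
    using Cons.IH[of "Suc k"] by (cases l) (simp_all add: chain_weight_Cons)
qed

lemma chain_weight_eq_prod: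
  "chain_weight w k xs = (\<Prod>i\<in>{1..<length xs}. w (i + k) (xs ! i < xs ! (i - 1)))"
proof (induction w k xs rule: chain_weight.induct)
  case (3 w k x y zs)
  let ?f = "\<lambda>i. w (i + k) ((x # y # zs) ! i < (x # y # zs) ! (i - 1))"
  have "(\<Prod>i\<in>{1..<length (x # y # zs)}. ?f i) = ?f 1 * (\<Prod>i\<in>{Suc 1..<Suc (length (y # zs))}. ?f i)"
    using prod.atLeast_Suc_lessThan[of 1 "length (x # y # zs)" ?f] by simp
  also have "(\<Prod>i\<in>{Suc 1..<Suc (length (y # zs))}. ?f i) = (\<Prod>i\<in>{1..<length (y # zs)}. ?f (Suc i))"
    by (rule prod.shift_bounds_Suc_ivl)
  also have "\<dots> = (\<Prod>i\<in>{1..<length (y # zs)}. w (i + Suc k) ((y # zs) ! i < (y # zs) ! (i - 1)))"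
    by (intro prod.cong) auto
  finally show ?case
    using "3" by simp
qed simp_all

lemma chain_weight_shift_even:
  assumes "\<And>i j. even i = even j \<Longrightarrow> w i = w j" and "even k"
  shows "chain_weight w k xs = chain_weight w 0 xs"
proof -
  have "w (i + k) = w i" for i
    by (rule assms(1)) (use assms(2) in simp)
  then show ?thesis
    unfolding chain_weight_eq_prod by simp
qed

lemma chain_weight_map_strict_mono:
  assumes "strict_mono_on (set xs) f"
  shows "chain_weight w k (map f xs) = chain_weight w k xs"
  using assms
proof (induction w k xs rule: chain_weight.induct)
  case (3 w k x y zs)
  have "f y < f x \<longleftrightarrow> y < x"
    using "3.prems" by (auto simp: strict_mono_on_less)
  with 3 show ?case by (auto intro: monotone_on_subset)
qed simp_all

definition perm_weight_sum :: "(nat \<Rightarrow> bool \<Rightarrow> real) \<Rightarrow> nat set \<Rightarrow> real" where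
  "perm_weight_sum w S = (\<Sum>xs\<in>permutations_of_set S. chain_weight w 0 xs)"

lemma perm_weight_sum_empty [simp]: "perm_weight_sum w {} = 1"
  by (simp add: perm_weight_sum_def)

lemma perm_weight_sum_image_strict_mono:
  assumes "strict_mono_on S f"
  shows "perm_weight_sum w (f ` S) = perm_weight_sum w S"
proof -
  have inj: "inj_on f S"
    using assms by (rule strict_mono_on_imp_inj_on)
  have "inj_on (map f) (permutations_of_set S)"
    using inj by (intro inj_on_mapI) (auto simp: permutations_of_set_def intro: inj_on_subset)
  then have "perm_weight_sum w (f ` S) = (\<Sum>xs\<in>permutations_of_set S. chain_weight w 0 (map f xs))"
    unfolding perm_weight_sum_def permutations_of_set_image_inj[OF inj] by (simp add: sum.reindex)
  also have "\<dots> = perm_weight_sum w S"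
    unfolding perm_weight_sum_def using assms
    by (intro sum.cong refl chain_weight_map_strict_mono) (simp add: permutations_of_set_def)
  finally show ?thesis .
qed

lemma perm_weight_sum_eq_card:
  assumes "finite S"
  shows "perm_weight_sum w S = perm_weight_sum w {1..card S}"
proof -
  define xs where "xs = sorted_list_of_set S"
  have mono: "strict_mono_on {1..card S} (\<lambda>i. xs ! (i - 1))"
  proof (rule strict_mono_onI)
    fix i j assume "i \<in> {1..card S}" "j \<in> {1..card S}" "i < j"
    moreover have "sorted_wrt (<) xs" "length xs = card S"
      by (simp_all add: xs_def)
    ultimately show "xs ! (i - 1) < xs ! (j - 1)"
      by (intro sorted_wrt_nth_less[of "(<)"]) auto
  qed
  have image: "(\<lambda>i. xs ! (i - 1)) ` {1..card S} = S"
  proof -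
    have "{1..card S} = Suc ` {0..<length xs}"
      using assms by (simp add: xs_def atLeastLessThanSuc_atLeastAtMost)
    then have "(\<lambda>i. xs ! (i - 1)) ` {1..card S} = nth xs ` {0..<length xs}"
      by (simp only: image_image diff_Suc_1)
    also have "\<dots> = S"
      using assms by (simp add: nth_image xs_def)
    finally show ?thesis .
  qed
  show ?thesis
    using perm_weight_sum_image_strict_mono[OF mono, of w] unfolding image .
qed

section \<open>Splitting a permutation at one entry\<close>

lemma sum_permutations_of_set_insert:
  assumes "finite U" and "x \<notin> U"
  shows "(\<Sum>xs\<in>permutations_of_set (insert x U). g xs) =
    (\<Sum>L\<in>Pow U. \<Sum>l\<in>permutations_of_set L. \<Sum>r\<in>permutations_of_set (U - L). g (l @ x # r))"
proof -
  let ?I = "Sigma (Pow U) (\<lambda>L. permutations_of_set L \<times> permutations_of_set (U - L))"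
  let ?h = "\<lambda>(L, l, r). l @ x # r"
  have "bij_betw ?h ?I (permutations_of_set (insert x U))"
  proof (rule bij_betwI')
    fix a b assume "a \<in> ?I" and "b \<in> ?I"
    moreover obtain L l r L' l' r' where "a = (L, l, r)" and "b = (L', l', r')"
      by (cases a, cases b) auto
    ultimately show "?h a = ?h b \<longleftrightarrow> a = b"
      using assms(2) by (auto simp: permutations_of_set_def append_Cons_eq_iff)
  next
    fix a assume "a \<in> ?I"
    then show "?h a \<in> permutations_of_set (insert x U)"
      using assms(2) by (cases a) (auto simp: permutations_of_set_def)
  next
    fix xs assume xs: "xs \<in> permutations_of_set (insert x U)"
    then obtain l r where lr: "xs = l @ x # r"
      by (metis permutations_of_setD(1) insertI1 split_list)
    then have "(set l, l, r) \<in> ?I"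
      using xs assms(2) by (auto simp: permutations_of_set_def)
    then show "\<exists>a\<in>?I. xs = ?h a"
      using lr by force
  qed
  then have "(\<Sum>xs\<in>permutations_of_set (insert x U). g xs) = (\<Sum>a\<in>?I. g (?h a))"
    by (simp add: sum.reindex_bij_betw)
  also have "\<dots> = (\<Sum>L\<in>Pow U. \<Sum>p\<in>permutations_of_set L \<times> permutations_of_set (U - L). g (fst p @ x # snd p))"
    using assms(1) by (subst sum.Sigma) (auto simp: case_prod_beta)
  also have "\<dots> = (\<Sum>L\<in>Pow U. \<Sum>l\<in>permutations_of_set L. \<Sum>r\<in>permutations_of_set (U - L). g (l @ x # r))"
    by (simp add: sum.cartesian_product case_prod_beta)
  finally show ?thesis .
qed

lemma sum_Pow_card:
  fixes G :: "nat \<Rightarrow> 'a :: semiring_1"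
  assumes "finite U"
  shows "(\<Sum>L\<in>Pow U. G (card L)) = (\<Sum>k\<le>card U. of_nat (card U choose k) * G k)"
proof -
  have "(\<Sum>L\<in>Pow U. G (card L)) = (\<Sum>k\<le>card U. \<Sum>L\<in>{L\<in>Pow U. card L = k}. G (card L))"
    using assms by (intro sum.group[symmetric]) (auto intro: card_mono)
  also have "\<dots> = (\<Sum>k\<le>card U. of_nat (card U choose k) * G k)"
    using assms by (intro sum.cong refl) (simp add: n_subsets)
  finally show ?thesis .
qed

lemma perm_weight_sum_insert:
  fixes F :: "nat \<Rightarrow> nat \<Rightarrow> real"
  assumes "finite U" and "x \<notin> U" and card_U: "card U = n"
    and factor: "\<And>l r. set l \<subseteq> U \<Longrightarrow> set r \<subseteq> U \<Longrightarrow>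
      chain_weight w 0 (l @ x # r) = F (length l) (length r) * chain_weight w 0 l * chain_weight w 0 r"
  shows "perm_weight_sum w (insert x U) = (\<Sum>k\<le>n. of_nat (n choose k)
           * (F k (n - k) * perm_weight_sum w {1..k} * perm_weight_sum w {1..n - k}))"
proof -
  let ?a = "\<lambda>k. perm_weight_sum w {1..k}"
  have split: "(\<Sum>l\<in>permutations_of_set L. \<Sum>r\<in>permutations_of_set (U - L). chain_weight w 0 (l @ x # r))
      = F (card L) (card U - card L) * ?a (card L) * ?a (card U - card L)" if "L \<subseteq> U" for L
  proof -
    have fin: "finite L"
      using that assms(1) by (rule finite_subset)
    then have card_diff: "card (U - L) = card U - card L"
      using that by (rule card_Diff_subset)
    have "(\<Sum>l\<in>permutations_of_set L. \<Sum>r\<in>permutations_of_set (U - L). chain_weight w 0 (l @ x # r))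
      = (\<Sum>l\<in>permutations_of_set L. \<Sum>r\<in>permutations_of_set (U - L).
           F (card L) (card (U - L)) * chain_weight w 0 l * chain_weight w 0 r)"
    proof (intro sum.cong refl)
      fix l r assume "l \<in> permutations_of_set L" and "r \<in> permutations_of_set (U - L)"
      then have "set l \<subseteq> U" "set r \<subseteq> U" "length l = card L" "length r = card (U - L)"
        using that by (auto dest: permutations_of_setD(1) length_finite_permutations_of_set)
      then show "chain_weight w 0 (l @ x # r) = F (card L) (card (U - L)) * chain_weight w 0 l * chain_weight w 0 r"
        by (simp add: factor)
    qed
    also have "\<dots> = F (card L) (card (U - L)) * (perm_weight_sum w L * perm_weight_sum w (U - L))"
      by (simp only: perm_weight_sum_def sum_product) (simp add: sum_distrib_left mult.assoc)
    finally show ?thesis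
      using fin assms(1) card_diff
      by (simp add: perm_weight_sum_eq_card[of L] perm_weight_sum_eq_card[of "U - L"] mult.assoc)
  qed
  have "perm_weight_sum w (insert x U) = (\<Sum>L\<in>Pow U. F (card L) (card U - card L) * ?a (card L) * ?a (card U - card L))"
    unfolding perm_weight_sum_def sum_permutations_of_set_insert[OF assms(1,2)]
    using split by (intro sum.cong refl) (simp add: perm_weight_sum_def)
  also have "\<dots> = (\<Sum>k\<le>card U. of_nat (card U choose k) * (F k (card U - k) * ?a k * ?a (card U - k)))"
    using sum_Pow_card[OF assms(1)] .
  finally show ?thesis
    by (simp only: card_U)
qed

section \<open>The recurrences for \<open>A\<^sub>n(0,q)\<close> and the Euler numbers\<close>

definition descent_weight :: "real \<Rightarrow> real \<Rightarrow> nat \<Rightarrow> bool \<Rightarrow> real" where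
  "descent_weight p q i d = (if d then if odd i then p else q else 1)"

definition alternating_weight :: "nat \<Rightarrow> bool \<Rightarrow> real" where
  "alternating_weight i d = (if d \<longleftrightarrow> odd i then 1 else 0)"

lemma A_eq_perm_weight_sum: "A n p q = perm_weight_sum (descent_weight p q) {1..n}"
proof -
  have "p ^ odes xs * q ^ edes xs = chain_weight (descent_weight p q) 0 xs" for xs
  proof -
    let ?D = "{i \<in> {1..<length xs}. xs ! i < xs ! (i - 1)}"
    have "odes xs = card (?D \<inter> {i. odd i})" and "edes xs = card (?D \<inter> - {i. odd i})"
      unfolding odes_def edes_def is_descent_def by (auto intro: arg_cong[where f = card])
    then have "p ^ odes xs * q ^ edes xs = (\<Prod>i\<in>?D. if odd i then p else q)"
      by (simp add: prod.If_cases)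
    also have "\<dots> = (\<Prod>i\<in>{1..<length xs}. descent_weight p q i (xs ! i < xs ! (i - 1)))"
      by (simp add: descent_weight_def prod.If_cases Int_def)
    finally show ?thesis
      by (simp add: chain_weight_eq_prod)
  qed
  then show ?thesis
    by (simp add: A_def perms_def perm_weight_sum_def)
qed

lemma euler_num_eq_perm_weight_sum: "real (euler_num n) = perm_weight_sum alternating_weight {1..n}"
proof -
  have "chain_weight alternating_weight 0 xs = (if alternating xs then 1 else 0)"
    if "distinct xs" for xs
  proof -
    have "alternating xs \<longleftrightarrow> (\<forall>i\<in>{1..<length xs}. (xs ! i < xs ! (i - 1)) = odd i)"
    proof -
      have "xs ! (i - 1) \<noteq> xs ! i" if "i \<in> {1..<length xs}" for i
        using that \<open>distinct xs\<close> by (auto simp: nth_eq_iff_index_eq)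
      then show ?thesis
        unfolding alternating_def by (metis linorder_neqE_nat not_less_iff_gr_or_eq)
    qed
    then show ?thesis
      by (auto simp: chain_weight_eq_prod alternating_weight_def prod_zero_iff)
  qed
  moreover have "real (euler_num n) = (\<Sum>xs\<in>perms n. if alternating xs then 1 else 0)"
  proof -
    have "{xs \<in> perms n. alternating xs} = perms n \<inter> Collect alternating"
      by auto
    then show ?thesis
      unfolding euler_num_def by (simp add: sum.If_cases perms_def)
  qed
  ultimately show ?thesis
    by (simp add: perms_def perm_weight_sum_def permutations_of_set_def)
qed

lemma A_0 [simp]: "A 0 p q = 1"
  by (simp add: A_def perms_def odes_def edes_def)

lemma euler_num_1: "euler_num 1 = 1"
proof -
  have "{xs \<in> perms 1. alternating xs} = {[1]}"
    by (auto simp: perms_def alternating_def)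
  then show ?thesis
    unfolding euler_num_def by simp
qed

lemma chain_weight_descent_weight_insert_max:
  assumes "\<forall>y \<in> set l \<union> set r. y < x"
  shows "chain_weight (descent_weight 0 q) 0 (l @ x # r) =
    (if r = [] then 1 else if odd (length l) then q else 0)
    * chain_weight (descent_weight 0 q) 0 l * chain_weight (descent_weight 0 q) 0 r"
proof -
  have "last l < x" if "l \<noteq> []"
    using last_in_set[OF that] assms by blast
  moreover have "hd r < x" if "r \<noteq> []"
    using hd_in_set[OF that] assms by blast
  moreover have "chain_weight (descent_weight 0 q) (Suc (length l)) r = chain_weight (descent_weight 0 q) 0 r"
    if "odd (length l)"
    using that by (intro chain_weight_shift_even) (auto simp: descent_weight_def)
  ultimately show ?thesis
    unfolding chain_weight_append_Cons by (auto simp: descent_weight_def)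
qed

lemma chain_weight_alternating_weight_insert_min:
  assumes "\<forall>y \<in> set l \<union> set r. x < y"
  shows "chain_weight alternating_weight 0 (l @ x # r) =
    (if odd (length l) then 1 else if l = [] \<and> r = [] then 1 else 0)
    * chain_weight alternating_weight 0 l * chain_weight alternating_weight 0 r"
proof -
  have "x < last l" if "l \<noteq> []"
    using last_in_set[OF that] assms by blast
  moreover have "x < hd r" if "r \<noteq> []"
    using hd_in_set[OF that] assms by blast
  moreover have "chain_weight alternating_weight (Suc (length l)) r = chain_weight alternating_weight 0 r"
    if "odd (length l)"
    using that by (intro chain_weight_shift_even) (auto simp: alternating_weight_def)
  ultimately show ?thesis
    unfolding chain_weight_append_Cons by (auto simp: alternating_weight_def)
qed

lemma A_0_Suc:
  "A (Suc n) 0 q = A n 0 q + q * (\<Sum>k<n. of_nat (n choose k) * (if odd k then A k 0 q * A (n - k) 0 q else 0))"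
proof -
  let ?w = "descent_weight 0 q"
  let ?F = "\<lambda>k j. if j = 0 then 1 else if odd k then q else 0"
  have factor: "chain_weight ?w 0 (l @ Suc n # r) = ?F (length l) (length r) * chain_weight ?w 0 l * chain_weight ?w 0 r"
    if "set l \<subseteq> {1..n}" and "set r \<subseteq> {1..n}" for l r
  proof -
    have "\<forall>y \<in> set l \<union> set r. y < Suc n"
      using that by auto
    then show ?thesis
      by (simp add: chain_weight_descent_weight_insert_max)
  qed
  have "A (Suc n) 0 q = perm_weight_sum ?w (insert (Suc n) {1..n})"
    by (simp add: A_eq_perm_weight_sum atLeastAtMostSuc_conv)
  also have "\<dots> = (\<Sum>k\<le>n. of_nat (n choose k) * (?F k (n - k) * perm_weight_sum ?w {1..k} * perm_weight_sum ?w {1..n - k}))"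
    by (rule perm_weight_sum_insert[OF _ _ _ factor]) simp_all
  also have "\<dots> = A n 0 q + (\<Sum>k<n. of_nat (n choose k) * (?F k (n - k) * A k 0 q * A (n - k) 0 q))"
    by (simp add: A_eq_perm_weight_sum lessThan_Suc_atMost[symmetric] add.commute)
  also have "(\<Sum>k<n. of_nat (n choose k) * (?F k (n - k) * A k 0 q * A (n - k) 0 q))
      = q * (\<Sum>k<n. of_nat (n choose k) * (if odd k then A k 0 q * A (n - k) 0 q else 0))"
    unfolding sum_distrib_left by (intro sum.cong refl) auto
  finally show ?thesis .
qed

lemma euler_num_Suc:
  assumes "n \<noteq> 0"
  shows "real (euler_num (Suc n)) =
    (\<Sum>k\<le>n. of_nat (n choose k) * (if odd k then real (euler_num k) * real (euler_num (n - k)) else 0))"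
proof -
  let ?F = "\<lambda>k j. if odd k then 1 else if k = 0 \<and> j = 0 then 1 else 0"
  have factor: "chain_weight alternating_weight 0 (l @ 1 # r)
      = ?F (length l) (length r) * chain_weight alternating_weight 0 l * chain_weight alternating_weight 0 r"
    if "set l \<subseteq> {2..Suc n}" and "set r \<subseteq> {2..Suc n}" for l r
  proof -
    have "\<forall>y \<in> set l \<union> set r. 1 < y"
      using that by auto
    then show ?thesis
      by (simp add: chain_weight_alternating_weight_insert_min)
  qed
  have "{1..Suc n} = insert 1 {2..Suc n}"
    by auto
  then have "real (euler_num (Suc n)) = perm_weight_sum alternating_weight (insert 1 {2..Suc n})"
    by (simp add: euler_num_eq_perm_weight_sum)
  also have "\<dots> = (\<Sum>k\<le>n. of_nat (n choose k)
      * (?F k (n - k) * perm_weight_sum alternating_weight {1..k} * perm_weight_sum alternating_weight {1..n - k}))"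
    by (rule perm_weight_sum_insert[OF _ _ _ factor]) simp_all
  also have "\<dots> = (\<Sum>k\<le>n. of_nat (n choose k) * (if odd k then real (euler_num k) * real (euler_num (n - k)) else 0))"
    using assms by (intro sum.cong refl) (auto simp: euler_num_eq_perm_weight_sum)
  finally show ?thesis .
qed

section \<open>Solving the recurrences\<close>

lemma sum_binomial_Suc_symmetric:
  fixes Y :: "nat \<Rightarrow> 'a :: comm_semiring_1"
  assumes sym: "\<And>k. k \<le> n \<Longrightarrow> Y (Suc n - k) = Y k"
  shows "(\<Sum>k\<le>Suc n. of_nat (Suc n choose k) * Y k) = 2 * (\<Sum>k\<le>n. of_nat (n choose k) * Y k)"
proof -
  have "(\<Sum>k\<le>Suc n. of_nat (Suc n choose k) * Y k)
      = Y 0 + (\<Sum>k\<le>n. of_nat (n choose Suc k) * Y (Suc k)) + (\<Sum>k\<le>n. of_nat (n choose k) * Y (Suc k))"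
    unfolding sum.atMost_Suc_shift by (simp add: sum.distrib algebra_simps)
  also have "Y 0 + (\<Sum>k\<le>n. of_nat (n choose Suc k) * Y (Suc k)) = (\<Sum>k\<le>n. of_nat (n choose k) * Y k)"
    using sum.atMost_Suc_shift[of "\<lambda>k. of_nat (n choose k) * Y k" n] by (simp add: binomial_eq_0)
  also have "(\<Sum>k\<le>n. of_nat (n choose k) * Y (Suc k)) = (\<Sum>k\<le>n. of_nat (n choose (n - k)) * Y (Suc (n - k)))"
    using sum.atLeastAtMost_rev[of "\<lambda>k. of_nat (n choose k) * Y (Suc k)" 0 n] by (simp add: atLeast0AtMost)
  also have "\<dots> = (\<Sum>k\<le>n. of_nat (n choose k) * Y k)"
  proof (intro sum.cong refl)
    fix k assume "k \<in> {..n}"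
    then have "Y (Suc (n - k)) = Y k" and "n choose (n - k) = n choose k"
      using sym[of k] by (simp_all add: Suc_diff_le binomial_symmetric[symmetric])
    then show "of_nat (n choose (n - k)) * Y (Suc (n - k)) = of_nat (n choose k) * Y k"
      by simp
  qed
  finally show ?thesis
    by (simp add: mult_2)
qed

context
  fixes a e :: "nat \<Rightarrow> real"
  assumes a_0: "a 0 = 1"
    and a_Suc: "\<And>n. a (Suc n) = a n - (\<Sum>k<n. of_nat (n choose k) * (if odd k then a k * a (n - k) else 0))"
    and e_1: "e 1 = 1"
    and e_Suc: "\<And>n. n \<noteq> 0 \<Longrightarrow> e (Suc n) = (\<Sum>k\<le>n. of_nat (n choose k) * (if odd k then e k * e (n - k) else 0))"
begin

lemma euler_formula_odd_step:
  assumes odd_IH: "\<And>j. j < m \<Longrightarrow> a (2*j+1) = (-1/2)^j * e (2*j+1)"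
    and even_IH: "\<And>j. j < m \<Longrightarrow> a (2*j+2) = (-1/2)^j * e (2*j+3) / 2"
  shows "a (2*m+1) = (-1/2)^m * e (2*m+1)"
proof (cases m)
  case 0
  then show ?thesis
    using a_Suc[of 0] e_1 by (simp add: a_0)
next
  case (Suc p)
  have pair: "a k * a (2*m - k) = (-1/2)^p * (e k * e (2*m - k))" if "odd k" "k < 2*m" for k
  proof -
    obtain i where k: "k = 2*i+1"
      using \<open>odd k\<close> oddE by blast
    define j where "j = p - i"
    have "i < m" "j < m" "2*m - k = 2*j+1" "p = i + j"
      using k that Suc by (auto simp: j_def)
    then show ?thesis
      using odd_IH[of i] odd_IH[of j] k by (simp add: power_add)
  qed
  have "a (2*m+1) = a (2*m) - (\<Sum>k<2*m. of_nat (2*m choose k) * (if odd k then a k * a (2*m - k) else 0))"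
    using a_Suc[of "2*m"] by simp
  also have "(\<Sum>k<2*m. of_nat (2*m choose k) * (if odd k then a k * a (2*m - k) else 0))
      = (-1/2)^p * (\<Sum>k<2*m. of_nat (2*m choose k) * (if odd k then e k * e (2*m - k) else 0))"
    unfolding sum_distrib_left by (intro sum.cong refl) (auto simp: pair)
  also have "(\<Sum>k<2*m. of_nat (2*m choose k) * (if odd k then e k * e (2*m - k) else 0)) = e (2*m+1)"
    using e_Suc[of "2*m"] Suc by (simp add: lessThan_Suc_atMost[symmetric])
  also have "a (2*m) = (-1/2)^p * e (2*m+1) / 2"
    using even_IH[of p] Suc by (simp add: numeral_3_eq_3)
  finally show ?thesis
    using Suc by simp
qed

lemma euler_formula_even_step:
  assumes odd_IH: "\<And>j. j \<le> m \<Longrightarrow> a (2*j+1) = (-1/2)^j * e (2*j+1)"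
    and even_IH: "\<And>j. j < m \<Longrightarrow> a (2*j+2) = (-1/2)^j * e (2*j+3) / 2"
  shows "a (2*m+2) = (-1/2)^m * e (2*m+3) / 2"
proof -
  define N where "N = 2*m+1"
  have pair: "a k * a (N - k) = - ((-1/2)^m * (e k * e (Suc N - k)))" if "odd k" "k < N" for k
  proof -
    obtain i where k: "k = 2*i+1"
      using \<open>odd k\<close> oddE by blast
    define j where "j = m - 1 - i"
    have "i \<le> m" "j < m" "N - k = 2*j+2" "Suc N - k = 2*j+3" "m = Suc (i + j)"
      using k that by (auto simp: j_def N_def)
    then show ?thesis
      using odd_IH[of i] even_IH[of j] k by (simp add: power_add)
  qed
  define S where "S = (\<Sum>k<N. of_nat (N choose k) * (if odd k then e k * e (Suc N - k) else 0))"
  have "a (Suc N) = a N - (\<Sum>k<N. of_nat (N choose k) * (if odd k then a k * a (N - k) else 0))"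
    by (rule a_Suc)
  also have "(\<Sum>k<N. of_nat (N choose k) * (if odd k then a k * a (N - k) else 0)) = - ((-1/2)^m * S)"
    unfolding S_def sum_distrib_left sum_negf[symmetric]
    by (intro sum.cong refl) (auto simp: pair)
  finally have a_even: "a (2*m+2) = (-1/2)^m * (e N + S)"
    using odd_IH[of m] by (simp add: N_def algebra_simps)
  have "e (2*m+3) = e (Suc (Suc N))"
    by (simp add: N_def numeral_3_eq_3)
  also have "\<dots> = (\<Sum>k\<le>Suc N. of_nat (Suc N choose k) * (if odd k then e k * e (Suc N - k) else 0))"
    by (rule e_Suc) simp
  also have "\<dots> = 2 * (\<Sum>k\<le>N. of_nat (N choose k) * (if odd k then e k * e (Suc N - k) else 0))"
    by (rule sum_binomial_Suc_symmetric) (auto simp: N_def Suc_diff_le)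
  also have "\<dots> = 2 * (e N + S)"
    using e_1 by (simp add: S_def N_def lessThan_Suc_atMost[symmetric])
  finally show ?thesis
    using a_even by simp
qed

lemma recurrences_imp_euler_formula:
  "a (2*m+1) = (-1/2)^m * e (2*m+1) \<and> a (2*m+2) = (-1/2)^m * e (2*m+3) / 2"
proof (induction m rule: less_induct)
  case (less m)
  have odd_IH: "a (2*j+1) = (-1/2)^j * e (2*j+1)" and even_IH: "a (2*j+2) = (-1/2)^j * e (2*j+3) / 2"
    if "j < m" for j
    using less that by blast+
  have odd: "a (2*m+1) = (-1/2)^m * e (2*m+1)"
    using odd_IH even_IH by (rule euler_formula_odd_step)
  have "a (2*j+1) = (-1/2)^j * e (2*j+1)" if "j \<le> m" for j
    using that odd odd_IH by (cases "j = m") simp_all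
  then have "a (2*m+2) = (-1/2)^m * e (2*m+3) / 2"
    using even_IH by (rule euler_formula_even_step)
  with odd show ?case ..
qed

end

theorem lemma3p4:
  fixes m :: nat
  shows "A (2*m+1) 0 (-1) = (-1)^m * real (euler_num (2*m+1)) / 2^m \<and>
         A (2*m+2) 0 (-1) = (-1)^m * real (euler_num (2*m+3)) / 2^(m+1)"
proof -
  have "A (2*m+1) 0 (-1) = (-1/2)^m * real (euler_num (2*m+1)) \<and>
        A (2*m+2) 0 (-1) = (-1/2)^m * real (euler_num (2*m+3)) / 2"
  proof (rule recurrences_imp_euler_formula)
    show "real (euler_num 1) = 1"
      using euler_num_1 by simp
  qed (simp_all add: A_0_Suc euler_num_Suc sum_negf)
  then show ?thesis
    unfolding power_divide by simp
qed

end
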